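(* Consider U-PB$(\hat x_0,\chi,\lambda_0,\bar\varepsilon,\overline N)$ described in the context, and let $i$ be the first iteration of a cycle with prox stepsize $\lambda$. Then: (a) if $\lambda\le(1-\chi)/(2L_f)$, then $t_i\le\frac{4\lambda M_f^2}{1-\chi}$; (b) if $\|x-y\|\le D$ for all $x,y\in\mathrm{dom}\, h$ (for some finite $D$), then $t_i\le\frac{\lambda(16M_f^2+L_f^2D^2)}{4(1-\chi)}$.
   Context: Setting: $f,h:\mathbb{R}^n\to\mathbb{R}\cup\{+\infty\}$ proper lsc convex, $\mathrm{dom}\, h\subseteq\mathrm{dom}\, f$, $\phi=f+h$, $\phi_*=\inf\phi$ attained. Subgradient oracle $f'(x)\in\partial f(x)$ on $\mathrm{dom}\, h$ with $\|f'(x)-f'(y)\|\le2M_f+L_f\|x-y\|$ for $x,y\in\mathrm{dom}\, h$, $M_f,L_f\ge0$. $\ell_f(u;x):=f(x)+\langle f'(x),u-x\rangle$. "Convex function" means proper lsc convex on $\mathbb{R}^n$. In (a), if $L_f=0$ the condition on $\lambda$ is vacuous. BU$(x^c,x,m_f,\lambda)$: given $\lambda>0$, convex $m_f\le f$ with $x=\mathrm{argmin}_u\{m_f(u)+h(u)+\frac1{2\lambda}\|u-x^c\|^2\}$, outputs any convex $m_f^+$ with $\max\{\overline m_f,\ell_f(\cdot;x)\}\le m_f^+\le f$, where $\overline m_f\le f$, $\overline m_f(x)=m_f(x)$ and $x=\mathrm{argmin}_u\{\overline m_f(u)+h(u)+\frac1{2\lambda}\|u-x^c\|^2\}$. U-PB$(\hat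 x_0,\chi,\lambda_0,\bar\varepsilon,\overline N)$, inputs in $\mathrm{dom}\, h\times[0,1)\times\mathbb{R}_{++}\times\mathbb{R}_{++}\times\{1,2,\ldots\}$: Step 0: $\lambda=\lambda_0$, $N=0$, $j=1$, $k=1$; choose convex $f_1$ with $\ell_f(\cdot;\hat x_0)\le f_1\le f$. Step 1: $x_j=\mathrm{argmin}_u\{(f_j+h)(u)+\frac1{2\lambda}\|u-\hat x_{k-1}\|^2\}$; if $\phi(x_j)-\phi_*\le\bar\varepsilon$ stop. Step 2: $\bar\phi_j=\phi(x_j)+\frac\chi{2\lambda}\|x_j-\hat x_{k-1}\|^2$ if $N=0$, else $\bar\phi_j=\min\{\bar\phi_{j-1},\phi(x_j)+\frac\chi{2\lambda}\|x_j-\hat x_{k-1}\|^2\}$; $N=N+1$; $t_j=\bar\phi_j-[(f_j+h)(x_j)+\frac1{2\lambda}\|x_j-\hat x_{k-1}\|^2]$. Step 3: if $t_j>(1-\chi)\bar\varepsilon/2$ and $N<\overline N$: null update $f_{j+1}=\mathrm{BU}(\hat x_{k-1},x_j,f_j,\lambda)$. Otherwise: if $t_j>(1-\chi)\bar\varepsilon/2$ and $N=\overline N$, reset update $\lambda\leftarrow\lambda/2$; else serious update $\hat x_k=x_j$, $\lambda_k=\lambda$, $k\leftarrow k+1$; then set $N=0$ and choose convex $f_{j+1}$ with $\ell_f(\cdot;\hat x_{k-1})\le f_{j+1}\le f$. Step 4: $j\leftarrow j+1$, go to Step 1. A cycle is a reset or serious iteration together with all consecutive null iterations immediately preceding it;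 its iterations share the same prox stepsize $\lambda$ and prox-center $\hat x_{k-1}$, and its first iteration is the one at which $N=0$ when entering Step 2. *)

theory Defs
  imports "HOL-Analysis.Analysis" "HOL-Library.Extended_Real"
begin

text \<open>A function R^n to R \<union> {+\<infinity>} is modelled as 'a \<Rightarrow> ereal never taking the value -\<infinity>.\<close>

definition edom :: "('a \<Rightarrow> ereal) \<Rightarrow> 'a set" where
  "edom F = {x. F x < \<infinity>}"

definition eproper :: "('a \<Rightarrow> ereal) \<Rightarrow> bool" where
  "eproper F \<longleftrightarrow> (\<forall>x. F x \<noteq> -\<infinity>) \<and> (\<exists>x. F x < \<infinity>)"

definition elsc :: "('a::topological_space \<Rightarrow> ereal) \<Rightarrow> bool" where
  "elsc F \<longleftrightarrow> (\<forall>a::ereal. closed {x. F x \<le> a})"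

definition econvex :: "('a::real_vector \<Rightarrow> ereal) \<Rightarrow> bool" where
  "econvex F \<longleftrightarrow> (\<forall>x y t. 0 < t \<and> t < 1 \<longrightarrow>
      F ((1 - t) *\<^sub>R x + t *\<^sub>R y) \<le> ereal (1 - t) * F x + ereal t * F y)"

text \<open>"Convex function" = proper lsc convex function on the whole space.\<close>
definition convex_fun :: "('a::real_normed_vector \<Rightarrow> ereal) \<Rightarrow> bool" where
  "convex_fun F \<longleftrightarrow> eproper F \<and> elsc F \<and> econvex F"

definition subdiff :: "('a::real_inner \<Rightarrow> ereal) \<Rightarrow> 'a \<Rightarrow> 'a set" where
  "subdiff F x = {g. \<forall>u. F u \<ge> F x + ereal (g \<bullet> (u - x))}"

definition lin :: "('a::real_inner \<Rightarrow> ereal) \<Rightarrow> ('a \<Rightarrow> 'a) \<Rightarrow> 'a \<Rightarrow> 'a \<Rightarrow> ereal" where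
  "lin f f' x u = f x + ereal (f' x \<bullet> (u - x))"

definition prox_argmin :: "('a::real_inner \<Rightarrow> ereal) \<Rightarrow> ('a \<Rightarrow> ereal) \<Rightarrow> real \<Rightarrow> 'a \<Rightarrow> 'a \<Rightarrow> bool" where
  "prox_argmin m h lam xc x \<longleftrightarrow>
     (\<forall>u. m x + h x + ereal (norm (x - xc)^2 / (2 * lam)) \<le> m u + h u + ereal (norm (u - xc)^2 / (2 * lam)))"

text \<open>Admissible outputs of BU(xc, x, m, lam): any convex m+ with
  max{mbar, lin(.;x)} \<le> m+ \<le> f, for some mbar \<le> f with mbar(x) = m(x) and
  x = argmin (mbar + h + 1/(2 lam)||. - xc||^2).\<close>
definition BU_out :: "('a::real_inner \<Rightarrow> ereal) \<Rightarrow> ('a \<Rightarrow> 'a) \<Rightarrow> ('a \<Rightarrow> ereal) \<Rightarrow>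
    'a \<Rightarrow> 'a \<Rightarrow> ('a \<Rightarrow> ereal) \<Rightarrow> real \<Rightarrow> ('a \<Rightarrow> ereal) \<Rightarrow> bool" where
  "BU_out f f' h xc x m lam mplus \<longleftrightarrow>
     (\<exists>mbar. (\<forall>u. mbar u \<le> f u) \<and> mbar x = m x \<and> prox_argmin mbar h lam xc x \<and>
        convex_fun mplus \<and> (\<forall>u. max (mbar u) (lin f f' x u) \<le> mplus u \<and> mplus u \<le> f u))"

definition model_ok :: "('a::real_inner \<Rightarrow> ereal) \<Rightarrow> ('a \<Rightarrow> 'a) \<Rightarrow> 'a \<Rightarrow> ('a \<Rightarrow> ereal) \<Rightarrow> bool" where
  "model_ok f f' xc F \<longleftrightarrow> convex_fun F \<and> (\<forall>u. lin f f' xc u \<le> F u \<and> F u \<le> f u)"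

text \<open>Quantities computed in Step 2 at iteration j:
  value v_j = phi(x_j) + chi/(2 lam)||x_j - xc||^2 entering the min defining phibar_j,
  and t_j = phibar_j - [(f_j + h)(x_j) + 1/(2 lam)||x_j - xc||^2].\<close>
definition vval :: "('a::real_inner \<Rightarrow> ereal) \<Rightarrow> ('a \<Rightarrow> ereal) \<Rightarrow> real \<Rightarrow> real \<Rightarrow> 'a \<Rightarrow> 'a \<Rightarrow> ereal" where
  "vval f h chi lam xc x = f x + h x + ereal (chi / (2 * lam) * norm (x - xc)^2)"

definition tval :: "('a::real_inner \<Rightarrow> ereal) \<Rightarrow> ('a \<Rightarrow> ereal) \<Rightarrow> real \<Rightarrow> 'a \<Rightarrow> 'a \<Rightarrow> ereal \<Rightarrow> ereal" where
  "tval F h lam xc x phib = phib - (F x + h x + ereal (norm (x - xc)^2 / (2 * lam)))"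

text \<open>A run of U-PB(x0, chi, lam0, epsbar, Nbar) up to (and including Step 1 of) iteration i.
  For each iteration j \<ge> 1 the trace records: lam j (prox stepsize), c j (prox center hat x_{k-1}),
  F j (model f_j), x j, Nin j (value of the counter N when entering Step 2) and phibar j.\<close>
definition UPB_run ::
  "('a::real_inner \<Rightarrow> ereal) \<Rightarrow> ('a \<Rightarrow> 'a) \<Rightarrow> ('a \<Rightarrow> ereal) \<Rightarrow> real \<Rightarrow>
   'a \<Rightarrow> real \<Rightarrow> real \<Rightarrow> real \<Rightarrow> nat \<Rightarrow>
   (nat \<Rightarrow> real) \<Rightarrow> (nat \<Rightarrow> 'a) \<Rightarrow> (nat \<Rightarrow> 'a \<Rightarrow> ereal) \<Rightarrow> (nat \<Rightarrow> 'a) \<Rightarrow> (nat \<Rightarrow> nat) \<Rightarrow>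
   (nat \<Rightarrow> ereal) \<Rightarrow> nat \<Rightarrow> bool" where
  "UPB_run f f' h phistar x0 chi lam0 epsbar Nbar lam c F x Nin phibar i \<longleftrightarrow>
     lam 1 = lam0 \<and> c 1 = x0 \<and> Nin 1 = 0 \<and> model_ok f f' x0 (F 1) \<and>
     (\<forall>j. 1 \<le> j \<and> j \<le> i \<longrightarrow>
        prox_argmin (F j) h (lam j) (c j) (x j) \<and>
        phibar j = (if Nin j = 0 then vval f h chi (lam j) (c j) (x j)
                    else min (phibar (j - 1)) (vval f h chi (lam j) (c j) (x j)))) \<and>
     (\<forall>j. 1 \<le> j \<and> j < i \<longrightarrow>
        (let t = tval (F j) h (lam j) (c j) (x j) (phibar j);
             thr = ereal ((1 - chi) * epsbar / 2) in
         f (x j) + h (x j) - ereal phistar > ereal epsbar \<and>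
         (if t > thr \<and> Nin j + 1 < Nbar then
            lam (Suc j) = lam j \<and> c (Suc j) = c j \<and> Nin (Suc j) = Nin j + 1 \<and>
            BU_out f f' h (c j) (x j) (F j) (lam j) (F (Suc j))
          else if t > thr \<and> Nin j + 1 = Nbar then
            lam (Suc j) = lam j / 2 \<and> c (Suc j) = c j \<and> Nin (Suc j) = 0 \<and>
            model_ok f f' (c (Suc j)) (F (Suc j))
          else
            lam (Suc j) = lam j \<and> c (Suc j) = x j \<and> Nin (Suc j) = 0 \<and>
            model_ok f f' (c (Suc j)) (F (Suc j)))))"

end

theory Submission
  imports Defs
begin

(* At the first iteration of a cycle, phibar equals phi(x) + chi/(2 lam) r^2 with r = |x - c|, and
   the model lies above the linearization of f at the prox centre c, so
     t <= f(x) - l_f(x; c) - (1 - chi)/(2 lam) r^2.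
   Integrating the subgradient along [c, x] (here: right Riemann sums and a limit) and using the
   growth bound on f' gives f(x) - l_f(x; c) <= 2 M r + L r^2/2. What remains is a concave
   quadratic in r: under the stepsize condition its maximum is 4 lam M^2/(1 - chi); on a domain of
   diameter D one first bounds L r^2 by L D r. *)

lemma linearization_gap_le_Riemann_sum:
  fixes fr :: "'a::real_inner \<Rightarrow> real" and g :: "'a \<Rightarrow> 'a" and n :: nat
  assumes "convex S" "c \<in> S" "x \<in> S"
    and subgrad: "\<And>u v. u \<in> S \<Longrightarrow> v \<in> S \<Longrightarrow> fr u + g u \<bullet> (v - u) \<le> fr v"
    and growth: "\<And>u v. u \<in> S \<Longrightarrow> v \<in> S \<Longrightarrow> norm (g u - g v) \<le> 2 * M + L * norm (u - v)"
    and "n > 0"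
  shows "fr x - fr c - g c \<bullet> (x - c)
           \<le> 2 * M * norm (x - c) + L * norm (x - c)^2 / 2 + L * norm (x - c)^2 / (2 * real n)"
proof -
  define r where "r = norm (x - c)"
  define d where "d = (1 / real n) *\<^sub>R (x - c)"
  define y where "y k = c + (real k / real n) *\<^sub>R (x - c)" for k
  have y_in_S: "y k \<in> S" if "k \<le> n" for k
  proof -
    have "y k = (1 - real k / real n) *\<^sub>R c + (real k / real n) *\<^sub>R x"
      by (simp add: y_def algebra_simps)
    moreover have "real k / real n \<le> 1"
      using that by (auto simp: divide_le_eq_1)
    ultimately show ?thesis
      using assms(1-3) by (simp add: convex_alt)
  qed
  have y_step: "y (Suc k) - y k = d" for k
  proof -
    have "y (Suc k) - y k = (real (Suc k) / real n - real k / real n) *\<^sub>R (x - c)"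
      by (simp add: y_def scaleR_diff_left)
    then show ?thesis
      by (simp add: d_def flip: diff_divide_distrib)
  qed
  have norm_y_c: "norm (y (Suc k) - c) = real (Suc k) / real n * r" for k
    by (simp add: y_def r_def)
  have term_le: "fr (y (Suc k)) - fr (y k) - g c \<bullet> d \<le> (2 * M + L * (real (Suc k) / real n * r)) * (r / n)"
    if "k < n" for k
  proof -
    have "fr (y (Suc k)) + g (y (Suc k)) \<bullet> (y k - y (Suc k)) \<le> fr (y k)"
      using subgrad y_in_S that by simp
    then have "fr (y (Suc k)) - fr (y k) \<le> g (y (Suc k)) \<bullet> d"
      by (simp add: inner_diff_right flip: y_step[of k])
    then have "fr (y (Suc k)) - fr (y k) - g c \<bullet> d \<le> (g (y (Suc k)) - g c) \<bullet> d"
      by (simp add: inner_diff_left)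
    also have "\<dots> \<le> norm (g (y (Suc k)) - g c) * (r / n)"
      using norm_cauchy_schwarz[of "g (y (Suc k)) - g c" d] by (simp add: d_def r_def)
    also have "\<dots> \<le> (2 * M + L * (real (Suc k) / real n * r)) * (r / n)"
      using growth[of "y (Suc k)" c] y_in_S that \<open>c \<in> S\<close>
      by (intro mult_right_mono) (auto simp: norm_y_c r_def)
    finally show ?thesis .
  qed
  have gauss: "(\<Sum>k<n. real (Suc k)) = real n * (real n + 1) / 2"
    by (induction n) (auto simp: field_simps)
  have "fr x - fr c - g c \<bullet> (x - c) = (\<Sum>k<n. fr (y (Suc k)) - fr (y k) - g c \<bullet> d)"
    using sum_lessThan_telescope[of "\<lambda>k. fr (y k)" n] \<open>n > 0\<close>
    by (simp add: sum_subtractf y_def d_def flip: inner_sum_right)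
  also have "\<dots> \<le> (\<Sum>k<n. (2 * M + L * (real (Suc k) / real n * r)) * (r / n))"
    by (intro sum_mono term_le) simp
  also have "\<dots> = 2 * M * r + L * r^2 / (real n)^2 * (\<Sum>k<n. real (Suc k))"
    using \<open>n > 0\<close>
    by (simp add: sum.distrib sum_distrib_left sum_distrib_right field_simps power2_eq_square flip: sum_divide_distrib)
  also have "\<dots> = 2 * M * r + L * r^2 / 2 + L * r^2 / (2 * real n)"
    unfolding gauss using \<open>n > 0\<close> by (simp add: field_simps power2_eq_square)
  finally show ?thesis by (simp add: r_def)
qed

lemma linearization_gap_le:
  fixes fr :: "'a::real_inner \<Rightarrow> real" and g :: "'a \<Rightarrow> 'a"
  assumes "convex S" "c \<in> S" "x \<in> S"
    and "\<And>u v. u \<in> S \<Longrightarrow> v \<in> S \<Longrightarrow> fr u + g u \<bullet> (v - u) \<le> fr v"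
    and "\<And>u v. u \<in> S \<Longrightarrow> v \<in> S \<Longrightarrow> norm (g u - g v) \<le> 2 * M + L * norm (u - v)"
  shows "fr x - fr c - g c \<bullet> (x - c) \<le> 2 * M * norm (x - c) + L * norm (x - c)^2 / 2"
proof (rule LIMSEQ_le_const)
  let ?B = "2 * M * norm (x - c) + L * norm (x - c)^2 / 2"
  have "(\<lambda>n. L * norm (x - c)^2 / (2 * real n)) \<longlonglongrightarrow> 0"
    using lim_const_over_n[of "L * norm (x - c)^2 / 2"] by simp
  then show "(\<lambda>n. ?B + L * norm (x - c)^2 / (2 * real n)) \<longlonglongrightarrow> ?B"
    using tendsto_add[OF tendsto_const, of _ 0 sequentially ?B] by simp
  show "\<exists>N. \<forall>n\<ge>N. fr x - fr c - g c \<bullet> (x - c) \<le> ?B + L * norm (x - c)^2 / (2 * real n)"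
    using linearization_gap_le_Riemann_sum[OF assms] by (intro exI[of _ 1]) auto
qed

lemma linear_minus_square_le:
  fixes a q r :: real
  assumes "q > 0"
  shows "a * r - q * r^2 \<le> a^2 / (4 * q)"
proof -
  have "0 \<le> (2 * q * r - a)^2" by simp
  then have "4 * q * (a * r - q * r^2) \<le> a^2"
    by (simp add: power2_eq_square algebra_simps)
  then show ?thesis
    using assms by (simp add: field_simps)
qed

lemma quadratic_gap_le_of_small_stepsize:
  fixes lam chi M L r :: real
  assumes "lam > 0" "chi < 1" "L \<ge> 0" "L = 0 \<or> lam \<le> (1 - chi) / (2 * L)"
  shows "2 * M * r + L * r^2 / 2 - (1 - chi) / (2 * lam) * r^2 \<le> 4 * lam * M^2 / (1 - chi)"
proof -
  have "2 * lam * L \<le> 1 - chi"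
    using assms by (cases "L = 0") (auto simp: field_simps)
  then have "L / 2 \<le> (1 - chi) / (4 * lam)"
    using \<open>lam > 0\<close> by (simp add: field_simps)
  then have "2 * M * r + L * r^2 / 2 - (1 - chi) / (2 * lam) * r^2
      \<le> 2 * M * r - (1 - chi) / (4 * lam) * r^2"
    using mult_right_mono[of "L / 2" "(1 - chi) / (4 * lam)" "r^2"] by (simp add: field_simps)
  also have "\<dots> \<le> (2 * M)^2 / (4 * ((1 - chi) / (4 * lam)))"
    using assms by (intro linear_minus_square_le) simp
  also have "\<dots> = 4 * lam * M^2 / (1 - chi)"
    using assms by (simp add: field_simps power2_eq_square)
  finally show ?thesis .
qed

lemma quadratic_gap_le_of_diameter:
  fixes lam chi M L r D :: real
  assumes "lam > 0" "chi < 1" "L \<ge> 0" "0 \<le> r" "r \<le> D"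
  shows "2 * M * r + L * r^2 / 2 - (1 - chi) / (2 * lam) * r^2
           \<le> lam * (16 * M^2 + L^2 * D^2) / (4 * (1 - chi))"
proof -
  have "L * r^2 \<le> L * D * r"
    using assms mult_left_mono[OF mult_right_mono[of r D r], of L] by (simp add: power2_eq_square algebra_simps)
  then have "2 * M * r + L * r^2 / 2 - (1 - chi) / (2 * lam) * r^2
      \<le> (2 * M + L * D / 2) * r - (1 - chi) / (2 * lam) * r^2"
    by (simp add: algebra_simps)
  also have "\<dots> \<le> (2 * M + L * D / 2)^2 / (4 * ((1 - chi) / (2 * lam)))"
    using assms by (intro linear_minus_square_le) simp
  also have "\<dots> = lam * (2 * M + L * D / 2)^2 / (2 * (1 - chi))"
    using assms by (simp add: field_simps)
  also have "\<dots> \<le> lam * (2 * (4 * M^2 + L^2 * D^2 / 4)) / (2 * (1 - chi))"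
  proof -
    have "(2 * M + L * D / 2)^2 \<le> 2 * (4 * M^2 + L^2 * D^2 / 4)"
      using sum_squares_ge_zero[of "2 * M - L * D / 2" 0] by (simp add: power2_eq_square algebra_simps)
    then show ?thesis
      using assms by (intro divide_right_mono mult_left_mono) auto
  qed
  also have "\<dots> = lam * (16 * M^2 + L^2 * D^2) / (4 * (1 - chi))"
    using assms by (simp add: field_simps)
  finally show ?thesis .
qed

lemma edom_convex:
  assumes "eproper h" "econvex h"
  shows "convex (edom h)"
  unfolding convex_alt
proof (intro ballI allI impI)
  fix z y :: 'a and u :: real
  assume z: "z \<in> edom h" and y: "y \<in> edom h" and u: "0 \<le> u \<and> u \<le> 1"
  show "(1 - u) *\<^sub>R z + u *\<^sub>R y \<in> edom h"
  proof (cases "u = 0 \<or> u = 1")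
    case True
    then show ?thesis using z y by auto
  next
    case False
    then have "h ((1 - u) *\<^sub>R z + u *\<^sub>R y) \<le> ereal (1 - u) * h z + ereal u * h y"
      using assms(2) u unfolding econvex_def by auto
    moreover have "h z \<noteq> -\<infinity>" "h y \<noteq> -\<infinity>"
      using assms(1) by (auto simp: eproper_def)
    ultimately show ?thesis
      using z y by (cases "h z"; cases "h y") (auto simp: edom_def)
  qed
qed

lemma prox_argmin_in_edom:
  assumes "prox_argmin m h lam xc x" "\<forall>u. m u \<noteq> -\<infinity>" "eproper h" "edom h \<subseteq> edom m"
  shows "x \<in> edom h"
proof (rule ccontr)
  assume "x \<notin> edom h"
  then have "m x + h x + ereal (norm (x - xc)^2 / (2 * lam)) = \<infinity>"
    using assms(2) by (simp add: edom_def)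
  moreover obtain z where "z \<in> edom h"
    using assms(3) by (auto simp: eproper_def edom_def)
  then have "m z + h z + ereal (norm (z - xc)^2 / (2 * lam)) < \<infinity>"
    using assms(2,4) by (auto simp: edom_def less_top)
  ultimately show False
    using assms(1) unfolding prox_argmin_def by (metis not_le)
qed

lemma UPB_run_step:
  assumes "UPB_run f f' h phistar x0 chi lam0 epsbar Nbar lam c F x Nin phibar i" "1 \<le> j" "j < i"
  shows "lam (Suc j) \<in> {lam j, lam j / 2}" "c (Suc j) \<in> {c j, x j}"
    and "convex_fun (F (Suc j))" "\<forall>u. F (Suc j) u \<le> f u"
    and "Nin (Suc j) = 0 \<Longrightarrow> model_ok f f' (c (Suc j)) (F (Suc j))"
proof -
  have "(if tval (F j) h (lam j) (c j) (x j) (phibar j) > ereal ((1 - chi) * epsbar / 2) \<and> Nin j + 1 < Nbar then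
            lam (Suc j) = lam j \<and> c (Suc j) = c j \<and> Nin (Suc j) = Nin j + 1 \<and>
            BU_out f f' h (c j) (x j) (F j) (lam j) (F (Suc j))
          else if tval (F j) h (lam j) (c j) (x j) (phibar j) > ereal ((1 - chi) * epsbar / 2) \<and> Nin j + 1 = Nbar then
            lam (Suc j) = lam j / 2 \<and> c (Suc j) = c j \<and> Nin (Suc j) = 0 \<and>
            model_ok f f' (c (Suc j)) (F (Suc j))
          else
            lam (Suc j) = lam j \<and> c (Suc j) = x j \<and> Nin (Suc j) = 0 \<and>
            model_ok f f' (c (Suc j)) (F (Suc j)))"
    using assms unfolding UPB_run_def Let_def by blast
  then show "lam (Suc j) \<in> {lam j, lam j / 2}" "c (Suc j) \<in> {c j, x j}"
    and "convex_fun (F (Suc j))" "\<forall>u. F (Suc j) u \<le> f u"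
    and "Nin (Suc j) = 0 \<Longrightarrow> model_ok f f' (c (Suc j)) (F (Suc j))"
    by (auto simp: BU_out_def model_ok_def split: if_splits)
qed

lemma UPB_run_iterate_in_edom:
  assumes run: "UPB_run f f' h phistar x0 chi lam0 epsbar Nbar lam c F x Nin phibar i"
    and "eproper h" "edom h \<subseteq> edom f" "1 \<le> j" "j \<le> i"
    and "convex_fun (F j)" "\<forall>u. F j u \<le> f u"
  shows "x j \<in> edom h"
proof (rule prox_argmin_in_edom)
  show "prox_argmin (F j) h (lam j) (c j) (x j)"
    using run assms(4,5) by (simp add: UPB_run_def)
  show "\<forall>u. F j u \<noteq> -\<infinity>"
    using \<open>convex_fun (F j)\<close> by (simp add: convex_fun_def eproper_def)
  show "edom h \<subseteq> edom (F j)"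
    using assms(3,7) unfolding edom_def by (blast intro: order.strict_trans1)
qed (fact \<open>eproper h\<close>)

lemma UPB_run_invariant:
  assumes run: "UPB_run f f' h phistar x0 chi lam0 epsbar Nbar lam c F x Nin phibar i"
    and "eproper h" "edom h \<subseteq> edom f" "x0 \<in> edom h" "lam0 > 0" "1 \<le> j" "j \<le> i"
  shows "lam j > 0 \<and> c j \<in> edom h \<and> convex_fun (F j) \<and> (\<forall>u. F j u \<le> f u)"
  using \<open>1 \<le> j\<close> \<open>j \<le> i\<close>
proof (induction j rule: nat_induct_at_least)
  case base
  then show ?case
    using run assms(4,5) by (auto simp: UPB_run_def model_ok_def)
next
  case (Suc j)
  then show ?case
    using UPB_run_step[OF run, of j] UPB_run_iterate_in_edom[OF run assms(2,3), of j] by auto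
qed

lemma UPB_run_cycle_start:
  assumes run: "UPB_run f f' h phistar x0 chi lam0 epsbar Nbar lam c F x Nin phibar i"
    and "1 \<le> i" "Nin i = 0"
  shows "model_ok f f' (c i) (F i)" "phibar i = vval f h chi (lam i) (c i) (x i)"
proof -
  show "phibar i = vval f h chi (lam i) (c i) (x i)"
    using run assms(2,3) by (simp add: UPB_run_def)
  show "model_ok f f' (c i) (F i)"
  proof (cases "i = 1")
    case True
    then show ?thesis using run by (simp add: UPB_run_def)
  next
    case False
    then obtain j where "i = Suc j" "1 \<le> j"
      using \<open>1 \<le> i\<close> by (cases i) auto
    then show ?thesis
      using UPB_run_step(5)[OF run, of j] \<open>Nin i = 0\<close> by simp
  qed
qed

lemma tval_le_linearization_gap:
  fixes f h m :: "'a::real_inner \<Rightarrow> ereal"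
  assumes "eproper f" "eproper h" "econvex h" "edom h \<subseteq> edom f"
    and subgrad: "\<forall>z\<in>edom h. f' z \<in> subdiff f z"
    and growth: "\<forall>z\<in>edom h. \<forall>y\<in>edom h. norm (f' z - f' y) \<le> 2 * M + L * norm (z - y)"
    and "lin f f' xc x \<le> m x" "m x \<le> f x" "xc \<in> edom h" "x \<in> edom h" "lam > 0"
  shows "tval m h lam xc x (vval f h chi lam xc x)
           \<le> ereal (2 * M * norm (x - xc) + L * norm (x - xc)^2 / 2 - (1 - chi) / (2 * lam) * norm (x - xc)^2)"
proof -
  define fr where "fr u = real_of_ereal (f u)" for u
  define r where "r = norm (x - xc)"
  have f_eq: "f u = ereal (fr u)" if "u \<in> edom h" for u
    using that \<open>eproper f\<close> \<open>edom h \<subseteq> edom f\<close>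
    by (cases "f u") (auto simp: fr_def eproper_def edom_def)
  have gap: "fr x - fr xc - f' xc \<bullet> (x - xc) \<le> 2 * M * r + L * r^2 / 2"
    unfolding r_def
  proof (rule linearization_gap_le[of "edom h"])
    show "convex (edom h)"
      using assms(2,3) by (rule edom_convex)
    show "fr u + f' u \<bullet> (v - u) \<le> fr v" if "u \<in> edom h" "v \<in> edom h" for u v
    proof -
      have "f u + ereal (f' u \<bullet> (v - u)) \<le> f v"
        using subgrad that(1) by (simp add: subdiff_def)
      then show ?thesis
        by (simp add: f_eq[OF that(1)] f_eq[OF that(2)])
    qed
  qed (use growth \<open>xc \<in> edom h\<close> \<open>x \<in> edom h\<close> in auto)
  obtain mx where mx: "m x = ereal mx" "fr xc + f' xc \<bullet> (x - xc) \<le> mx"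
    using assms(7,8) f_eq[OF \<open>xc \<in> edom h\<close>] f_eq[OF \<open>x \<in> edom h\<close>]
    by (cases "m x") (auto simp: lin_def)
  obtain hx where hx: "h x = ereal hx"
    using \<open>eproper h\<close> \<open>x \<in> edom h\<close> by (cases "h x") (auto simp: eproper_def edom_def)
  have "tval m h lam xc x (vval f h chi lam xc x)
      = ereal (fr x + hx + chi / (2 * lam) * r^2) - ereal (mx + hx + r^2 / (2 * lam))"
    by (simp add: tval_def vval_def f_eq[OF \<open>x \<in> edom h\<close>] mx(1) hx r_def)
  also have "\<dots> = ereal (fr x - mx - (1 - chi) / (2 * lam) * r^2)"
    by (simp add: diff_divide_distrib left_diff_distrib)
  finally show ?thesis
    using gap mx(2) by (simp add: r_def)
qed

theorem lemma4p3:
  fixes f h :: "'a::euclidean_space \<Rightarrow> ereal"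
    and f' :: "'a \<Rightarrow> 'a"
    and Mf Lf phistar :: real
    and x0 :: 'a and chi lam0 epsbar :: real and Nbar :: nat
    and lam :: "nat \<Rightarrow> real" and c x :: "nat \<Rightarrow> 'a" and F :: "nat \<Rightarrow> 'a \<Rightarrow> ereal"
    and Nin :: "nat \<Rightarrow> nat" and phibar :: "nat \<Rightarrow> ereal" and i :: nat
  assumes f_cvx: "convex_fun f" and h_cvx: "convex_fun h"
    and dom_sub: "edom h \<subseteq> edom f"
    and phistar_min: "\<exists>z. f z + h z = ereal phistar" "\<forall>y. ereal phistar \<le> f y + h y"
    and subgrad: "\<forall>z\<in>edom h. f' z \<in> subdiff f z"
    and Mf_nonneg: "Mf \<ge> 0" and Lf_nonneg: "Lf \<ge> 0"
    and growth: "\<forall>z\<in>edom h. \<forall>y\<in>edom h. norm (f' z - f' y) \<le> 2 * Mf + Lf * norm (z - y)"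
    and inputs: "x0 \<in> edom h" "0 \<le> chi" "chi < 1" "lam0 > 0" "epsbar > 0" "Nbar \<ge> 1"
    and run: "UPB_run f f' h phistar x0 chi lam0 epsbar Nbar lam c F x Nin phibar i"
    and i_pos: "i \<ge> 1"
    and first: "Nin i = 0"
  shows "((Lf = 0 \<or> lam i \<le> (1 - chi) / (2 * Lf)) \<longrightarrow>
           tval (F i) h (lam i) (c i) (x i) (phibar i) \<le> ereal (4 * lam i * Mf^2 / (1 - chi))) \<and>
         (\<forall>D::real. (\<forall>z\<in>edom h. \<forall>y\<in>edom h. norm (z - y) \<le> D) \<longrightarrow>
           tval (F i) h (lam i) (c i) (x i) (phibar i)
             \<le> ereal (lam i * (16 * Mf^2 + Lf^2 * D^2) / (4 * (1 - chi))))"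
proof -
  have f_props: "eproper f" and h_props: "eproper h" "econvex h"
    using f_cvx h_cvx by (auto simp: convex_fun_def)
  have inv: "lam i > 0" "c i \<in> edom h" "x i \<in> edom h"
    using UPB_run_invariant[OF run h_props(1) dom_sub inputs(1,4) i_pos order.refl]
      UPB_run_iterate_in_edom[OF run h_props(1) dom_sub i_pos order.refl] by auto
  note cycle_start = UPB_run_cycle_start[OF run i_pos first]
  define r where "r = norm (x i - c i)"
  have t_le: "tval (F i) h (lam i) (c i) (x i) (phibar i)
                \<le> ereal (2 * Mf * r + Lf * r^2 / 2 - (1 - chi) / (2 * lam i) * r^2)"
    unfolding cycle_start(2) r_def
    using cycle_start(1) inv unfolding model_ok_def
    by (intro tval_le_linearization_gap[OF f_props h_props dom_sub subgrad growth]) simp_all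
  show ?thesis
  proof (intro conjI impI allI)
    assume "Lf = 0 \<or> lam i \<le> (1 - chi) / (2 * Lf)"
    then have "2 * Mf * r + Lf * r^2 / 2 - (1 - chi) / (2 * lam i) * r^2 \<le> 4 * lam i * Mf^2 / (1 - chi)"
      by (rule quadratic_gap_le_of_small_stepsize[OF inv(1) inputs(3) Lf_nonneg])
    with t_le show "tval (F i) h (lam i) (c i) (x i) (phibar i) \<le> ereal (4 * lam i * Mf^2 / (1 - chi))"
      by (simp add: order_trans)
  next
    fix D :: real
    assume "\<forall>z\<in>edom h. \<forall>y\<in>edom h. norm (z - y) \<le> D"
    then have "r \<le> D"
      using inv by (simp add: r_def)
    then have "2 * Mf * r + Lf * r^2 / 2 - (1 - chi) / (2 * lam i) * r^2
        \<le> lam i * (16 * Mf^2 + Lf^2 * D^2) / (4 * (1 - chi))"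
      by (intro quadratic_gap_le_of_diameter[OF inv(1) inputs(3) Lf_nonneg]) (simp_all add: r_def)
    with t_le show "tval (F i) h (lam i) (c i) (x i) (phibar i)
        \<le> ereal (lam i * (16 * Mf^2 + Lf^2 * D^2) / (4 * (1 - chi)))"
      by (simp add: order_trans)
  qed
qed

end
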